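(* Let $c>0$. There exist constants $T_0>0$ and $r_0>0$ depending only on $c$ such that for all $T\ge T_0$ and all integers $\ell\ge1$, $$F_{T-r_0,c,\ell}\setminus C_\ell\ \subseteq\ E_{T,c}\setminus C_0\ \subseteq\ F_{T+r_0,c}.$$
   Context: $\mathcal C=\{x\in\mathbb R^{n+2}: x_1^2+\dots+x_{n+1}^2=x_{n+2}^2,\ x_{n+2}>0\}$, $n\ge1$. For $T,c>0$: $E_{T,c}=\{x\in\mathcal C:2x_{n+2}(x_{n+2}-x_{n+1})<c^2,\ 1\le x_{n+2}<\cosh T\}$; $F_{T,c}=\{x\in\mathcal C:x_{n+2}^2-x_{n+1}^2<c^2,\ c\le x_{n+2}+x_{n+1}<ce^T\}$; for integers $\ell\ge1$, $c_\ell=c\,(\ell/(\ell+1))^{1/2}$ and $F_{T,c,\ell}=\{x\in\mathcal C:x_{n+2}^2-x_{n+1}^2<c_\ell^2,\ c\le x_{n+2}+x_{n+1}<ce^T\}$; $C_0=\{x\in\mathcal C:x_{n+2}\le \tfrac{c^2+c}2+1\}$ and $C_\ell=\{x\in\mathcal C:|x_{n+1}|/x_{n+2}\le \ell/(\ell+1)\}\cup C_0$. *)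

theory Defs
  imports "HOL-Analysis.Analysis"
begin

text \<open>Points of R^(n+2) are represented as functions nat => real with coordinates
  x 1, ..., x (n+2) and all other coordinates equal to 0.\<close>

definition light_cone :: "nat \<Rightarrow> (nat \<Rightarrow> real) set" where
  "light_cone n = {x. (\<forall>i. i \<notin> {1..n+2} \<longrightarrow> x i = 0) \<and>
      (\<Sum>i=1..n+1. (x i)^2) = (x (n+2))^2 \<and> x (n+2) > 0}"

definition E_set :: "nat \<Rightarrow> real \<Rightarrow> real \<Rightarrow> (nat \<Rightarrow> real) set" where
  "E_set n T c = {x \<in> light_cone n. 2 * x (n+2) * (x (n+2) - x (n+1)) < c^2 \<and>
      1 \<le> x (n+2) \<and> x (n+2) < cosh T}"

definition F_set :: "nat \<Rightarrow> real \<Rightarrow> real \<Rightarrow> (nat \<Rightarrow> real) set" where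
  "F_set n T c = {x \<in> light_cone n. (x (n+2))^2 - (x (n+1))^2 < c^2 \<and>
      c \<le> x (n+2) + x (n+1) \<and> x (n+2) + x (n+1) < c * exp T}"

definition c_ell :: "real \<Rightarrow> nat \<Rightarrow> real" where
  "c_ell c l = c * sqrt (real l / (real l + 1))"

definition F_ell_set :: "nat \<Rightarrow> real \<Rightarrow> real \<Rightarrow> nat \<Rightarrow> (nat \<Rightarrow> real) set" where
  "F_ell_set n T c l = {x \<in> light_cone n. (x (n+2))^2 - (x (n+1))^2 < (c_ell c l)^2 \<and>
      c \<le> x (n+2) + x (n+1) \<and> x (n+2) + x (n+1) < c * exp T}"

definition C0_set :: "nat \<Rightarrow> real \<Rightarrow> (nat \<Rightarrow> real) set" where
  "C0_set n c = {x \<in> light_cone n. x (n+2) \<le> (c^2 + c) / 2 + 1}"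

definition C_ell_set :: "nat \<Rightarrow> real \<Rightarrow> nat \<Rightarrow> (nat \<Rightarrow> real) set" where
  "C_ell_set n c l = {x \<in> light_cone n. \<bar>x (n+1)\<bar> / x (n+2) \<le> real l / (real l + 1)}
      \<union> C0_set n c"

end

theory Submission
  imports Defs
begin

text \<open>In the coordinates \<open>t = x(n+2)\<close>, \<open>s = x(n+1)\<close>, \<open>u = t + s\<close>, \<open>v = t - s \<ge> 0\<close> one has
  \<open>t\<^sup>2 - s\<^sup>2 = u v\<close> and \<open>2 t (t - s) = u v + v\<^sup>2\<close>. Off \<open>C\<^sub>0\<close> the point is far out, so \<open>v\<close> is small
  and \<open>u \<approx> 2t\<close>; the conditions defining \<open>E\<close> and \<open>F\<close> then differ only by the term \<open>v\<^sup>2\<close> and by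
  the comparison of \<open>2 cosh T\<close> with \<open>e\<^sup>T\<close>, which a bounded shift \<open>r\<^sub>0\<close> of \<open>T\<close> absorbs.
  Off \<open>C\<^sub>\<ell>\<close> one has moreover \<open>(2\<ell>+1) v < u\<close>, so \<open>u v + v\<^sup>2 < u v (2\<ell>+2)/(2\<ell>+1)\<close>, and
  the smaller constant \<open>c\<^sub>\<ell>\<^sup>2 = c\<^sup>2 \<ell>/(\<ell>+1)\<close> brings this below \<open>c\<^sup>2 2\<ell>/(2\<ell>+1) < c\<^sup>2\<close>.\<close>

lemma light_cone_abs_coord_le:
  assumes "x \<in> light_cone n"
  shows "\<bar>x (n+1)\<bar> \<le> x (n+2)"
proof -
  have "(x (n+1))^2 \<le> (\<Sum>i=1..n+1. (x i)^2)"
    by (rule member_le_sum) auto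
  also have "\<dots> = (x (n+2))^2"
    using assms by (simp add: light_cone_def)
  finally show ?thesis
    using assms abs_le_square_iff[of "x (n+1)" "x (n+2)"] by (simp add: light_cone_def)
qed

lemma two_mul_diff_lt_of_ratio_gt:
  fixes t s L c :: real
  assumes "0 \<le> L" "s \<le> t" "L * t < (L + 1) * s" "t^2 - s^2 < c^2 * (L / (L + 1))"
  shows "2 * t * (t - s) < c^2"
proof -
  define u where "u = t + s"
  define v where "v = t - s"
  have "v \<ge> 0" using assms(2) by (simp add: v_def)
  have uv: "u * v = t^2 - s^2" by (simp add: u_def v_def power2_eq_square algebra_simps)
  have ratio: "(2*L + 1) * v < u" using assms(3) by (simp add: u_def v_def algebra_simps)
  have "(2*L + 1) * (2 * t * v) = (2*L + 1) * (u * v) + ((2*L + 1) * v) * v"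
    by (simp add: u_def v_def algebra_simps)
  also have "\<dots> \<le> (2*L + 1) * (u * v) + u * v"
    using ratio \<open>v \<ge> 0\<close> by (intro add_left_mono mult_right_mono) auto
  also have "\<dots> = (2*L + 2) * (u * v)" by (simp add: algebra_simps)
  also have "\<dots> < (2*L + 2) * (c^2 * (L / (L + 1)))"
    using uv assms(1,4) by (intro mult_strict_left_mono) auto
  also have "\<dots> = 2 * L * c^2" using assms(1) by (simp add: field_simps)
  also have "\<dots> \<le> (2*L + 1) * c^2" by (simp add: algebra_simps)
  finally have "(2*L + 1) * (2 * t * v) < (2*L + 1) * c^2" .
  then show ?thesis using assms(1) by (simp add: v_def mult_less_cancel_left_pos)
qed

lemma E_minus_C0_subset_F:
  fixes c r T :: real
  assumes "c > 0" "2 \<le> c * exp r" "T \<ge> 0"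
  shows "E_set n T c - C0_set n c \<subseteq> F_set n (T + r) c"
proof
  fix x assume x: "x \<in> E_set n T c - C0_set n c"
  define t where "t = x (n+2)"
  define s where "s = x (n+1)"
  have cone: "x \<in> light_cone n" using x by (simp add: E_set_def)
  have "\<bar>s\<bar> \<le> t" using light_cone_abs_coord_le[OF cone] by (simp add: s_def t_def)
  have E: "2 * t * (t - s) < c^2" "t < cosh T"
    using x by (simp_all add: E_set_def t_def s_def)
  have "\<not> t \<le> (c^2 + c) / 2 + 1" using x cone by (simp add: C0_set_def t_def)
  then have far: "c^2 + c + 2 < 2 * t" by (simp add: not_le field_simps)
  have "t^2 - s^2 = (t + s) * (t - s)" by (simp add: power2_eq_square algebra_simps)
  also have "\<dots> \<le> 2 * t * (t - s)" using \<open>\<bar>s\<bar> \<le> t\<close> by (intro mult_right_mono) auto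
  finally have "t^2 - s^2 < c^2" using E(1) by linarith
  moreover have "c \<le> t + s"
  proof -
    have "0 < 2 * t" using far \<open>c > 0\<close> zero_le_power2[of c] by linarith
    moreover have "2 * t * (t - s) < 2 * t * 1" using E(1) far \<open>c > 0\<close> by simp
    ultimately have "t - s < 1" using mult_less_cancel_left_pos by blast
    then show ?thesis using far \<open>c > 0\<close> zero_le_power2[of c] by linarith
  qed
  moreover have "t + s < c * exp (T + r)"
  proof -
    have "2 * cosh T \<le> 2 * exp T" using \<open>T \<ge> 0\<close> by (simp add: cosh_def)
    also have "\<dots> \<le> c * exp r * exp T" using assms(2) by (intro mult_right_mono) auto
    finally show ?thesis using \<open>\<bar>s\<bar> \<le> t\<close> E(2) by (simp add: exp_add mult_ac)
  qed
  ultimately show "x \<in> F_set n (T + r) c" using cone by (simp add: F_set_def t_def s_def)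
qed

lemma F_ell_minus_C_ell_subset_E_minus_C0:
  fixes c r T :: real
  assumes "c > 0" "l \<ge> 1" "c * exp (-r) \<le> 1/2" "2 * c \<le> exp T"
  shows "F_ell_set n (T - r) c l - C_ell_set n c l \<subseteq> E_set n T c - C0_set n c"
proof
  fix x assume x: "x \<in> F_ell_set n (T - r) c l - C_ell_set n c l"
  define t where "t = x (n+2)"
  define s where "s = x (n+1)"
  define L where "L = real l"
  have cone: "x \<in> light_cone n" using x by (simp add: F_ell_set_def)
  have "\<bar>s\<bar> \<le> t" "t > 0"
    using light_cone_abs_coord_le[OF cone] cone by (auto simp: s_def t_def light_cone_def)
  have "L \<ge> 1" using assms(2) by (simp add: L_def)
  have "(c_ell c l)^2 = c^2 * (L / (L + 1))" by (simp add: c_ell_def L_def power_mult_distrib)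
  then have F: "t^2 - s^2 < c^2 * (L / (L + 1))" "c \<le> t + s" "t + s < c * exp (T - r)"
    using x by (simp_all add: F_ell_set_def t_def s_def)
  have "\<not> \<bar>s\<bar> / t \<le> L / (L + 1)" "\<not> t \<le> (c^2 + c) / 2 + 1"
    using x cone by (simp_all add: C_ell_set_def C0_set_def t_def s_def L_def)
  then have off_C: "L * t < (L + 1) * \<bar>s\<bar>" and far: "c^2 + c + 2 < 2 * t"
    using \<open>t > 0\<close> \<open>L \<ge> 1\<close> by (simp_all add: not_le field_simps)
  have "c^2 * (L / (L + 1)) \<le> c^2 * 1" using \<open>L \<ge> 1\<close> by (intro mult_left_mono) auto
  with F(1) have "(t + s) * (t - s) < c^2" by (simp add: power2_eq_square algebra_simps)
  have "s \<ge> 0"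
  proof (rule ccontr)
    assume "\<not> s \<ge> 0"
    then have "c * c \<le> (t + s) * (t - s)" using F(2) \<open>c > 0\<close> by (intro mult_mono) auto
    with \<open>(t + s) * (t - s) < c^2\<close> show False by (simp add: power2_eq_square)
  qed
  then have "2 * t * (t - s) < c^2"
    using \<open>L \<ge> 1\<close> \<open>\<bar>s\<bar> \<le> t\<close> off_C by (intro two_mul_diff_lt_of_ratio_gt[OF _ _ _ F(1)]) auto
  moreover have "t < cosh T"
  proof -
    have "c * (t - s) \<le> (t + s) * (t - s)" using F(2) \<open>\<bar>s\<bar> \<le> t\<close> by (intro mult_right_mono) auto
    with \<open>(t + s) * (t - s) < c^2\<close> have "c * (t - s) < c * c" by (simp add: power2_eq_square)
    then have "t - s < c" using \<open>c > 0\<close> by (simp add: mult_less_cancel_left_pos)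
    moreover have "c * exp (T - r) \<le> exp T / 2"
      using mult_right_mono[OF assms(3), of "exp T"] by (simp add: exp_diff exp_minus field_simps)
    ultimately have "t < exp T / 2" using F(3) assms(4) by linarith
    then show ?thesis using cosh_plus_sinh[of T] cosh_minus_sinh[of T] exp_gt_zero[of "-T"] by linarith
  qed
  moreover have "1 \<le> t" using far \<open>c > 0\<close> zero_le_power2[of c] by linarith
  ultimately show "x \<in> E_set n T c - C0_set n c"
    using cone far by (simp add: E_set_def C0_set_def t_def s_def field_simps)
qed

theorem lemma2p1:
  fixes c :: real
  assumes "c > 0"
  shows "\<exists>T0 r0. T0 > 0 \<and> r0 > 0 \<and>
    (\<forall>n::nat. n \<ge> 1 \<longrightarrow> (\<forall>T. T \<ge> T0 \<longrightarrow> (\<forall>l::nat. l \<ge> 1 \<longrightarrow>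
      F_ell_set n (T - r0) c l - C_ell_set n c l \<subseteq> E_set n T c - C0_set n c \<and>
      E_set n T c - C0_set n c \<subseteq> F_set n (T + r0) c)))"
proof (intro exI conjI allI impI)
  define r0 where "r0 = 2 * c + 2 / c"
  show "2 * c > 0" "r0 > 0" using assms by (simp_all add: r0_def add_pos_pos)
  have "r0 < exp r0" using exp_ge_add_one_self[of r0] by linarith
  moreover have "0 < 2 / c" using assms by simp
  ultimately have "2 * c \<le> exp r0" "2 / c \<le> exp r0" using assms unfolding r0_def by linarith+
  then have r0_large: "2 \<le> c * exp r0" "c * exp (-r0) \<le> 1/2"
    using assms by (simp_all add: exp_minus field_simps)
  fix n :: nat and T :: real and l :: nat
  assume "T \<ge> 2 * c" "l \<ge> 1"
  then have "2 * c \<le> exp T" "T \<ge> 0" using exp_ge_add_one_self[of T] assms by linarith+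
  then show "F_ell_set n (T - r0) c l - C_ell_set n c l \<subseteq> E_set n T c - C0_set n c"
    "E_set n T c - C0_set n c \<subseteq> F_set n (T + r0) c"
    using F_ell_minus_C_ell_subset_E_minus_C0 E_minus_C0_subset_F assms r0_large \<open>l \<ge> 1\<close> by auto
qed

end
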